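(* Let $n\ge2$, let $a_1,\dots,a_n$ be real numbers, $C(t)=\sum_{j=1}^n a_j\cos jt$, $S(t)=\sum_{j=1}^n a_j\sin jt$. Let $1\le m<n$ and let $t_1,\dots,t_m\in(0,\pi)$ be pairwise distinct with $$S(t_1)=\dots=S(t_m)=0,\qquad C(t_1)=\dots=C(t_m).$$ Define numbers $a^{(j)}_k$ recursively: $a^{(0)}_k=a_k$ ($k=1,\dots,n$), and for $j=1,\dots,m$ set $a^{(j)}_{n-j+1}=a^{(j)}_{n-j+2}=0$ and, for $k=n-j+1,n-j,\dots,2$ (in this order), $$a^{(j)}_{k-1}=2a^{(j-1)}_k+2\cos t_j\,a^{(j)}_k-a^{(j)}_{k+1}.$$ Then $$C(t_1)=\dots=C(t_m)=-\frac{a^{(m)}_m}{2^m}.$$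
   Context: The recursion determines $a^{(m)}_m$ uniquely from $a_2,\dots,a_n$ and $t_1,\dots,t_m$. *)

theory Defs
  imports Complex_Main
begin

text \<open>One sweep of the recursion for a fixed level j \<ge> 1.
  prev = a^(j-1), c = cos t_j, T = n - j + 2 (top index).
  down prev c T d = a^(j)_(T - d), so a^(j)_T = a^(j)_(T-1) = 0 and
  a^(j)_(k-1) = 2 a^(j-1)_k + 2 c a^(j)_k - a^(j)_(k+1) with k = T - (d+1).\<close>
fun down :: "(nat \<Rightarrow> real) \<Rightarrow> real \<Rightarrow> nat \<Rightarrow> nat \<Rightarrow> real" where
  "down prev c T 0 = 0"
| "down prev c T (Suc 0) = 0"
| "down prev c T (Suc (Suc d)) =
     2 * prev (T - Suc d) + 2 * c * down prev c T (Suc d) - down prev c T d"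

text \<open>acoef n a t j k = a^(j)_k  (meaningful for 1 \<le> k \<le> n - j + 2).\<close>
fun acoef :: "nat \<Rightarrow> (nat \<Rightarrow> real) \<Rightarrow> (nat \<Rightarrow> real) \<Rightarrow> nat \<Rightarrow> nat \<Rightarrow> real" where
  "acoef n a t 0 = a"
| "acoef n a t (Suc j) =
     (\<lambda>k. down (acoef n a t j) (cos (t (Suc j))) (n + 1 - j) (n + 1 - j - k))"

definition Cfun :: "nat \<Rightarrow> (nat \<Rightarrow> real) \<Rightarrow> real \<Rightarrow> real" where
  "Cfun n a x = (\<Sum>j=1..n. a j * cos (real j * x))"

definition Sfun :: "nat \<Rightarrow> (nat \<Rightarrow> real) \<Rightarrow> real \<Rightarrow> real" where
  "Sfun n a x = (\<Sum>j=1..n. a j * sin (real j * x))"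

end

theory Submission
  imports Defs
begin

text \<open>Write C_j and S_j for the cosine and sine sums with coefficients a^(j). Since
  cos((k+1)x) + cos((k-1)x) = 2 cos x cos(kx), and likewise for sine, summation by parts turns the
  recursion into
    C_j(x) = (cos x - cos t_(j+1)) C_(j+1)(x) + (a^(j+1)_0 cos x - a^(j+1)_1) / 2,
    S_j(x) = (cos x - cos t_(j+1)) S_(j+1)(x) + a^(j+1)_0 sin x / 2.
  Evaluating at t_(j+1), where sin t_(j+1) \<noteq> 0, forces a^(j+1)_0 = 0 and a^(j+1)_1 = -2 C_j(t_(j+1));
  evaluating at the later t_i, whose cosines are distinct, shows that C_(j+1) and S_(j+1) vanish
  there. Inductively a^(j)_k = 0 for k < j, so below j the recursion is homogeneous with zero
  initial values, and the leading coefficient just doubles: a^(j)_j = -2^j C(t_1).\<close>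

lemma cos_Suc_Suc_mult:
  "cos (real (Suc (Suc k)) * x) = 2 * cos x * cos (real (Suc k) * x) - cos (real k * x)"
proof -
  have "real (Suc (Suc k)) * x = real (Suc k) * x + x" "real k * x = real (Suc k) * x - x"
    by (simp_all add: algebra_simps)
  then show ?thesis by (simp only: cos_add cos_diff) simp
qed

lemma sin_Suc_Suc_mult:
  "sin (real (Suc (Suc k)) * x) = 2 * cos x * sin (real (Suc k) * x) - sin (real k * x)"
proof -
  have "real (Suc (Suc k)) * x = real (Suc k) * x + x" "real k * x = real (Suc k) * x - x"
    by (simp_all add: algebra_simps)
  then show ?thesis by (simp only: sin_add sin_diff) simp
qed

lemma sum_second_difference_by_parts:
  fixes q w :: "nat \<Rightarrow> 'a::comm_ring_1"
  assumes w_rec: "\<And>k. w (Suc (Suc k)) = 2 * b * w (Suc k) - w k"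
  shows "(\<Sum>k=1..N. (q (k - 1) - 2 * c * q k + q (k + 1)) * w k) =
    2 * (b - c) * (\<Sum>k=1..N. q k * w k) + q 0 * w 1 - q 1 * w 0
    + (q (N + 1) * w N - q N * w (N + 1))"
proof (induction N)
  case 0
  then show ?case by simp
next
  case (Suc N)
  define S where "S = (\<Sum>k=1..N. q k * w k)"
  have "(\<Sum>k=1..Suc N. (q (k - 1) - 2 * c * q k + q (k + 1)) * w k) =
      2 * (b - c) * S + q 0 * w 1 - q 1 * w 0 + (q (N + 1) * w N - q N * w (N + 1))
      + (q N - 2 * c * q (N + 1) + q (N + 2)) * w (N + 1)"
    using Suc.IH by (simp add: S_def)
  also have "\<dots> = 2 * (b - c) * (S + q (N + 1) * w (N + 1)) + q 0 * w 1 - q 1 * w 0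
      + (q (N + 2) * w (N + 1) - q (N + 1) * w (Suc (Suc N)))"
    unfolding w_rec[of N] by (simp add: algebra_simps)
  finally show ?case by (simp add: S_def)
qed

lemma second_order_recurrence_zero:
  fixes q :: "nat \<Rightarrow> 'a::comm_ring_1"
  assumes "q 0 = 0" "q 1 = 0"
    and rec: "\<And>k. Suc (Suc k) \<le> N \<Longrightarrow> q (Suc (Suc k)) = 2 * c * q (Suc k) - q k"
    and "k \<le> N"
  shows "q k = 0"
  using \<open>k \<le> N\<close>
proof (induction k rule: induct_nat_012)
  case (ge2 k)
  then show ?case using rec[of k] by simp
qed (use assms in simp_all)

declare acoef.simps(2) [simp del]

lemma down_top_eq_0:
  assumes "T \<le> k + 1"
  shows "down p c T (T - k) = 0"
proof -
  have "T - k = 0 \<or> T - k = Suc 0" using assms by arith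
  then show ?thesis by auto
qed

lemma down_rec:
  assumes "1 \<le> k" "k + 1 \<le> T"
  shows "down p c T (T - (k - 1)) = 2 * p k + 2 * c * down p c T (T - k) - down p c T (T - (k + 1))"
proof -
  define d where "d = T - (k + 1)"
  have "T - (k - 1) = Suc (Suc d)" "T - Suc d = k" "T - k = Suc d"
    using assms by (simp_all add: d_def)
  then show ?thesis by (simp add: d_def)
qed

lemma acoef_above_eq_0:
  assumes "1 \<le> j" "n + 1 - j \<le> k"
  shows "acoef n a t j k = 0"
proof -
  obtain i where j: "j = Suc i" using assms by (cases j) auto
  have "acoef n a t j k = down (acoef n a t i) (cos (t (Suc i))) (n + 1 - i) (n + 1 - i - k)"
    by (simp add: j acoef.simps)
  also have "\<dots> = 0" by (rule down_top_eq_0) (use assms j in simp)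
  finally show ?thesis .
qed

text \<open>Above the top index \<open>n - j\<close> all four coefficients vanish, so the recursion holds for every
  \<open>1 \<le> k \<le> n\<close>.\<close>
lemma acoef_rec:
  assumes "1 \<le> k" "k \<le> n" "j < n"
  shows "2 * acoef n a t j k = acoef n a t (Suc j) (k - 1)
    - 2 * cos (t (Suc j)) * acoef n a t (Suc j) k + acoef n a t (Suc j) (k + 1)"
proof (cases "k + 1 \<le> n + 1 - j")
  case True
  then show ?thesis
    using down_rec[OF assms(1) True, of "acoef n a t j" "cos (t (Suc j))"] by (simp add: acoef.simps)
next
  case False
  then have "1 \<le> j" using assms by simp
  with False assms show ?thesis by (simp add: acoef_above_eq_0)
qed

lemma acoef_weighted_sum_step:
  fixes w :: "nat \<Rightarrow> real"
  assumes "j < n" and w_rec: "\<And>k. w (Suc (Suc k)) = 2 * b * w (Suc k) - w k"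
  shows "(\<Sum>k=1..n. acoef n a t j k * w k) =
    (b - cos (t (Suc j))) * (\<Sum>k=1..n. acoef n a t (Suc j) k * w k)
    + (acoef n a t (Suc j) 0 * w 1 - acoef n a t (Suc j) 1 * w 0) / 2"
proof -
  let ?q = "acoef n a t (Suc j)" and ?c = "cos (t (Suc j))"
  have "2 * (\<Sum>k=1..n. acoef n a t j k * w k) =
      (\<Sum>k=1..n. (?q (k - 1) - 2 * ?c * ?q k + ?q (k + 1)) * w k)"
    unfolding sum_distrib_left by (rule sum.cong) (use acoef_rec[OF _ _ assms(1)] in auto)
  also have "\<dots> = 2 * (b - ?c) * (\<Sum>k=1..n. ?q k * w k) + ?q 0 * w 1 - ?q 1 * w 0"
    unfolding sum_second_difference_by_parts[where w = w and b = b, OF w_rec]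
    using acoef_above_eq_0[of "Suc j" n n a t] acoef_above_eq_0[of "Suc j" n "n + 1" a t]
    by simp
  finally show ?thesis by (simp add: field_simps)
qed

lemma Cfun_acoef_step:
  assumes "j < n"
  shows "Cfun n (acoef n a t j) x =
    (cos x - cos (t (Suc j))) * Cfun n (acoef n a t (Suc j)) x
    + (acoef n a t (Suc j) 0 * cos x - acoef n a t (Suc j) 1) / 2"
  using acoef_weighted_sum_step[where w = "\<lambda>k. cos (real k * x)", OF assms cos_Suc_Suc_mult, of a t]
  by (simp add: Cfun_def)

lemma Sfun_acoef_step:
  assumes "j < n"
  shows "Sfun n (acoef n a t j) x =
    (cos x - cos (t (Suc j))) * Sfun n (acoef n a t (Suc j)) x
    + acoef n a t (Suc j) 0 * sin x / 2"
  using acoef_weighted_sum_step[where w = "\<lambda>k. sin (real k * x)", OF assms sin_Suc_Suc_mult, of a t]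
  by (simp add: Sfun_def)

lemma acoef_values_step:
  assumes "j < n" "Suc j \<le> m"
    and sin_ne: "sin (t (Suc j)) \<noteq> 0"
    and cos_ne: "\<And>i. i \<in> {Suc (Suc j)..m} \<Longrightarrow> cos (t i) \<noteq> cos (t (Suc j))"
    and vals: "\<And>i. i \<in> {Suc j..m} \<Longrightarrow>
      Cfun n (acoef n a t j) (t i) = \<gamma> \<and> Sfun n (acoef n a t j) (t i) = 0"
  shows "acoef n a t (Suc j) 0 = 0" and "acoef n a t (Suc j) 1 = -2 * \<gamma>"
    and "\<And>i. i \<in> {Suc (Suc j)..m} \<Longrightarrow>
      Cfun n (acoef n a t (Suc j)) (t i) = 0 \<and> Sfun n (acoef n a t (Suc j)) (t i) = 0"
proof -
  note C = Cfun_acoef_step[OF \<open>j < n\<close>, of a t] and S = Sfun_acoef_step[OF \<open>j < n\<close>, of a t]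
  have at_first: "Suc j \<in> {Suc j..m}" using assms(2) by simp
  show a0: "acoef n a t (Suc j) 0 = 0"
    using S[of "t (Suc j)"] vals[OF at_first] sin_ne by simp
  show a1: "acoef n a t (Suc j) 1 = -2 * \<gamma>"
    using C[of "t (Suc j)"] vals[OF at_first] a0 by simp
  fix i assume i: "i \<in> {Suc (Suc j)..m}"
  then have "i \<in> {Suc j..m}" by simp
  then have "(cos (t i) - cos (t (Suc j))) * Cfun n (acoef n a t (Suc j)) (t i) = 0"
    and "(cos (t i) - cos (t (Suc j))) * Sfun n (acoef n a t (Suc j)) (t i) = 0"
    using C[of "t i"] S[of "t i"] vals a0 a1 by simp_all
  then show "Cfun n (acoef n a t (Suc j)) (t i) = 0 \<and> Sfun n (acoef n a t (Suc j)) (t i) = 0"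
    using cos_ne[OF i] by simp
qed

lemma acoef_leading_step:
  assumes "j < n" "1 \<le> j" and low: "\<forall>k<j. acoef n a t j k = 0"
    and "acoef n a t (Suc j) 0 = 0" "acoef n a t (Suc j) 1 = 0"
  shows "\<forall>k<Suc j. acoef n a t (Suc j) k = 0"
    and "acoef n a t (Suc j) (Suc j) = 2 * acoef n a t j j"
proof -
  have rec: "2 * acoef n a t j (Suc k) = acoef n a t (Suc j) k
      - 2 * cos (t (Suc j)) * acoef n a t (Suc j) (Suc k) + acoef n a t (Suc j) (Suc (Suc k))"
    if "k < j" for k
    using acoef_rec[of "Suc k" n j a t] that assms(1) by simp
  have homogeneous: "acoef n a t (Suc j) (Suc (Suc k)) =
      2 * cos (t (Suc j)) * acoef n a t (Suc j) (Suc k) - acoef n a t (Suc j) k"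
    if "Suc (Suc k) \<le> j" for k
    using rec[of k] low that by simp
  show zero: "\<forall>k<Suc j. acoef n a t (Suc j) k = 0"
    using second_order_recurrence_zero[OF assms(4,5) homogeneous] by simp
  obtain i where j: "j = Suc i" using \<open>1 \<le> j\<close> by (cases j) auto
  show "acoef n a t (Suc j) (Suc j) = 2 * acoef n a t j j"
    using rec[of i] zero unfolding j by simp
qed

lemma acoef_invariant:
  assumes "m < n" "1 \<le> j" "j \<le> m"
    and sin_ne: "\<And>i. i \<in> {1..m} \<Longrightarrow> sin (t i) \<noteq> 0"
    and cos_ne: "\<And>i i'. i \<in> {1..m} \<Longrightarrow> i' \<in> {1..m} \<Longrightarrow> i \<noteq> i' \<Longrightarrow> cos (t i) \<noteq> cos (t i')"
    and vals: "\<And>i. i \<in> {1..m} \<Longrightarrow> Cfun n a (t i) = K \<and> Sfun n a (t i) = 0"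
  shows "(\<forall>i\<in>{Suc j..m}. Cfun n (acoef n a t j) (t i) = 0 \<and> Sfun n (acoef n a t j) (t i) = 0)
    \<and> (\<forall>k<j. acoef n a t j k = 0) \<and> acoef n a t j j = - (2 ^ j) * K"
  using assms(2,3)
proof (induction j rule: nat_induct_at_least)
  case base
  have step: "acoef n a t 1 0 = 0" "acoef n a t 1 1 = -2 * K"
    "\<And>i. i \<in> {2..m} \<Longrightarrow> Cfun n (acoef n a t 1) (t i) = 0 \<and> Sfun n (acoef n a t 1) (t i) = 0"
    using acoef_values_step[of 0 n m t a K] assms base by (simp_all add: numeral_2_eq_2)
  then show ?case by (simp add: numeral_2_eq_2 less_Suc_eq)
next
  case (Suc j)
  then have IH: "\<forall>i\<in>{Suc j..m}. Cfun n (acoef n a t j) (t i) = 0 \<and> Sfun n (acoef n a t j) (t i) = 0"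
    "\<forall>k<j. acoef n a t j k = 0" "acoef n a t j j = - (2 ^ j) * K"
    by simp_all
  have "j < n" using Suc.prems \<open>m < n\<close> by simp
  note step = acoef_values_step[where a = a and \<gamma> = 0, OF this Suc.prems]
  have a0: "acoef n a t (Suc j) 0 = 0" and a1: "acoef n a t (Suc j) 1 = 0"
    and vals': "\<forall>i\<in>{Suc (Suc j)..m}. Cfun n (acoef n a t (Suc j)) (t i) = 0
      \<and> Sfun n (acoef n a t (Suc j)) (t i) = 0"
    using step sin_ne cos_ne IH(1) Suc.prems by simp_all
  show ?case
    using vals' acoef_leading_step[OF \<open>j < n\<close> \<open>1 \<le> j\<close> IH(2) a0 a1] IH(3) by simp
qed

theorem corollary3:
  fixes n m :: nat and a t :: "nat \<Rightarrow> real"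
  assumes "n \<ge> 2" and "1 \<le> m" and "m < n"
    and "\<forall>i\<in>{1..m}. 0 < t i \<and> t i < pi"
    and "inj_on t {1..m}"
    and "\<forall>i\<in>{1..m}. Sfun n a (t i) = 0"
    and "\<forall>i\<in>{1..m}. Cfun n a (t i) = Cfun n a (t 1)"
  shows "\<forall>i\<in>{1..m}. Cfun n a (t i) = - acoef n a t m m / 2 ^ m"
proof -
  define K where "K = Cfun n a (t 1)"
  have sin_ne: "sin (t i) \<noteq> 0" if "i \<in> {1..m}" for i
    using sin_gt_zero assms(4) that by (metis less_irrefl)
  have cos_ne: "cos (t i) \<noteq> cos (t i')" if "i \<in> {1..m}" "i' \<in> {1..m}" "i \<noteq> i'" for i i'
  proof
    assume "cos (t i) = cos (t i')"
    moreover have "0 < t i" "t i < pi" "0 < t i'" "t i' < pi" using assms(4) that(1,2) by auto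
    ultimately have "t i = t i'" using cos_inj_pi[of "t i" "t i'"] by linarith
    with assms(5) that show False by (auto dest: inj_onD)
  qed
  have vals: "Cfun n a (t i) = K \<and> Sfun n a (t i) = 0" if "i \<in> {1..m}" for i
    using assms(6,7) that unfolding K_def by blast
  have "acoef n a t m m = - (2 ^ m) * K"
    using acoef_invariant[where t = t and a = a, OF assms(3,2) order_refl sin_ne cos_ne vals]
    by simp
  then show ?thesis using vals by simp
qed

end
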